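(* For $m\ge 2$ there is an injective $\mathcal R$-morphism $g:C_m'\to C_2'$ such that for all $i,j<m$, \[ g(p_i)\cdot g(q_j)=\delta_{i,j}\quad\text{and}\quad p_0\cdot g(q_j)=0=g(p_i)\cdot q_0, \] where $p_i,q_j$ denote the congruence classes of $\{p_i\},\{q_j\}$ in $C_m'$ and in $C_2'$ respectively.
   Context: An $\mathcal R$-dioid is a dioid in which every regular subset of its multiplicative monoid has a supremum $\sum A$ with $\sum(AB)=(\sum A)(\sum B)$ (equivalently a $*$-continuous Kleene algebra); an $\mathcal R$-morphism is a dioid morphism preserving suprema of regular sets; an $\mathcal R$-congruence is a semiring congruence $\rho$ such that regular sets with equal downward closures modulo $\rho$ have congruent suprema. For $k\ge1$, $\Delta_k=\{p_0,\dots,p_{k-1},q_0,\dots,q_{k-1}\}$ and the polycyclic $\mathcal R$-dioid is $C_k'=\mathcal R\Delta_k^*/\rho$, where $\mathcal R\Delta_k^*$ is the algebra of regular languages over $\Delta_k$ and $\rho$ the least $\mathcal R$-congruence containing $p_iq_j=\delta_{i,j}$ for $i,j<k$ ($\delta$ the Kronecker delta). *)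

theory Defs
  imports Main
begin

inductive_set mstar :: "('a \<Rightarrow> 'a \<Rightarrow> 'a) \<Rightarrow> 'a \<Rightarrow> 'a set \<Rightarrow> 'a set"
  for mult :: "'a \<Rightarrow> 'a \<Rightarrow> 'a" and one :: 'a and A :: "'a set" where
  mstar_one: "one \<in> mstar mult one A"
| mstar_step: "a \<in> A \<Longrightarrow> x \<in> mstar mult one A \<Longrightarrow> mult a x \<in> mstar mult one A"

definition setmult :: "('a \<Rightarrow> 'a \<Rightarrow> 'a) \<Rightarrow> 'a set \<Rightarrow> 'a set \<Rightarrow> 'a set" where
  "setmult mult A B = {mult a b | a b. a \<in> A \<and> b \<in> B}"

inductive rat :: "'a set \<Rightarrow> ('a \<Rightarrow> 'a \<Rightarrow> 'a) \<Rightarrow> 'a \<Rightarrow> 'a set \<Rightarrow> bool"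
  for U :: "'a set" and mult :: "'a \<Rightarrow> 'a \<Rightarrow> 'a" and one :: 'a where
  rat_empty: "rat U mult one {}"
| rat_single: "a \<in> U \<Longrightarrow> rat U mult one {a}"
| rat_union: "rat U mult one A \<Longrightarrow> rat U mult one B \<Longrightarrow> rat U mult one (A \<union> B)"
| rat_prod: "rat U mult one A \<Longrightarrow> rat U mult one B \<Longrightarrow> rat U mult one (setmult mult A B)"
| rat_star: "rat U mult one A \<Longrightarrow> rat U mult one (mstar mult one A)"

datatype letter = P nat | Q nat

definition Delta :: "nat \<Rightarrow> letter set" where
  "Delta k = P ` {..<k} \<union> Q ` {..<k}"

type_synonym lang = "letter list set"

definition Reg :: "nat \<Rightarrow> lang set" where
  "Reg k = {L. rat {[x] | x. x \<in> Delta k} (@) [] L}"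

definition conc :: "lang \<Rightarrow> lang \<Rightarrow> lang" (infixl "@@" 75) where
  "L @@ M = {u @ v | u v. u \<in> L \<and> v \<in> M}"

text \<open>Regular subsets of the multiplicative monoid of the R-dioid R Delta_k^*.\<close>
definition ratfam :: "nat \<Rightarrow> lang set \<Rightarrow> bool" where
  "ratfam k A = rat (Reg k) (@@) {[]} A"

definition leq_mod :: "(lang \<times> lang) set \<Rightarrow> lang \<Rightarrow> lang \<Rightarrow> bool" where
  "leq_mod r a b \<longleftrightarrow> (a \<union> b, b) \<in> r"

definition semiring_cong :: "nat \<Rightarrow> (lang \<times> lang) set \<Rightarrow> bool" where
  "semiring_cong k r \<longleftrightarrow> equiv (Reg k) r \<and>
     (\<forall>a b c d. (a, b) \<in> r \<longrightarrow> (c, d) \<in> r \<longrightarrow>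
        (a \<union> c, b \<union> d) \<in> r \<and> (a @@ c, b @@ d) \<in> r)"

text \<open>Equal downward closures modulo r of the images of A and B means mutual
domination in the quotient order.\<close>
definition R_cong :: "nat \<Rightarrow> (lang \<times> lang) set \<Rightarrow> bool" where
  "R_cong k r \<longleftrightarrow> semiring_cong k r \<and>
     (\<forall>A B. ratfam k A \<longrightarrow> ratfam k B \<longrightarrow>
        (\<forall>a\<in>A. \<exists>b\<in>B. leq_mod r a b) \<longrightarrow> (\<forall>b\<in>B. \<exists>a\<in>A. leq_mod r b a) \<longrightarrow>
        (\<Union>A, \<Union>B) \<in> r)"

definition gens :: "nat \<Rightarrow> (lang \<times> lang) set" where
  "gens k = {({[P i]} @@ {[Q j]}, if i = j then {[]} else {}) | i j. i < k \<and> j < k}"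

text \<open>rho k: the least R-congruence containing p_i q_j = delta_ij.  C_k' = Reg k // rho k.\<close>
definition rho :: "nat \<Rightarrow> (lang \<times> lang) set" where
  "rho k = \<Inter>{r. R_cong k r \<and> gens k \<subseteq> r}"

definition is_lub_mod :: "nat \<Rightarrow> lang set \<Rightarrow> lang \<Rightarrow> bool" where
  "is_lub_mod k A s \<longleftrightarrow> s \<in> Reg k \<and> (\<forall>a\<in>A. leq_mod (rho k) a s) \<and>
     (\<forall>c\<in>Reg k. (\<forall>a\<in>A. leq_mod (rho k) a c) \<longrightarrow> leq_mod (rho k) s c)"

text \<open>g maps representatives to representatives, respects the congruences (so it
induces a map C_m' \<rightarrow> C_n'), the induced map is a dioid morphism and preserves
suprema of regular subsets (every regular subset of C_m' is the class image of a
regular family of representatives).\<close>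
definition R_morph :: "nat \<Rightarrow> nat \<Rightarrow> (lang \<Rightarrow> lang) \<Rightarrow> bool" where
  "R_morph m n g \<longleftrightarrow>
     (\<forall>L\<in>Reg m. g L \<in> Reg n) \<and>
     (\<forall>a b. (a, b) \<in> rho m \<longrightarrow> (g a, g b) \<in> rho n) \<and>
     (g {}, {}) \<in> rho n \<and> (g {[]}, {[]}) \<in> rho n \<and>
     (\<forall>a\<in>Reg m. \<forall>b\<in>Reg m. (g (a \<union> b), g a \<union> g b) \<in> rho n \<and> (g (a @@ b), g a @@ g b) \<in> rho n) \<and>
     (\<forall>A s. ratfam m A \<longrightarrow> is_lub_mod m A s \<longrightarrow> is_lub_mod n (g ` A) (g s))"

definition inj_mod :: "nat \<Rightarrow> nat \<Rightarrow> (lang \<Rightarrow> lang) \<Rightarrow> bool" where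
  "inj_mod m n g \<longleftrightarrow> (\<forall>a\<in>Reg m. \<forall>b\<in>Reg m. (g a, g b) \<in> rho n \<longrightarrow> (a, b) \<in> rho m)"

end

theory Submission
  imports Defs
begin

(* Using p_i q_j = delta_ij, every word over Delta_k reduces to zero or to a unique normal form
   q_u p_v.  Two regular languages are rho-congruent iff they contain the same nonzero normal
   forms: this relation is an R-congruence containing the defining relations, and conversely
   every such congruence identifies a word with its normal form, hence (by the supremum
   condition applied to the families of singletons) any two languages with the same normal
   forms.  The morphism p_i |-> p_1 p_0^i p_1, q_j |-> q_1 q_0^j q_1 maps normal forms to normal
   forms, injectively because the codewords 1 0^i 1 form a prefix code; so it is an injective
   R-morphism, and the required identities are computations of normal forms. *)

section \<open>Normal forms in the polycyclic monoid\<close>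

type_synonym normal_form = "nat list \<times> nat list"

text \<open>A normal form \<open>(u, v)\<close> stands for the word \<open>q\<^sub>u p\<^sub>v\<close> and \<open>None\<close> for the zero
of the polycyclic monoid; \<open>nf_cons x\<close> is left multiplication by the letter \<open>x\<close>.\<close>

fun nf_cons :: "letter \<Rightarrow> normal_form option \<Rightarrow> normal_form option" where
  "nf_cons x None = None"
| "nf_cons (Q j) (Some (u, v)) = Some (j # u, v)"
| "nf_cons (P i) (Some ([], v)) = Some ([], i # v)"
| "nf_cons (P i) (Some (j # u, v)) = (if i = j then Some (u, v) else None)"

definition nf :: "letter list \<Rightarrow> normal_form option" where
  "nf w = foldr nf_cons w (Some ([], []))"

fun nf_word :: "normal_form \<Rightarrow> letter list" where
  "nf_word (u, v) = map Q u @ map P v"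

fun nf_mult :: "normal_form option \<Rightarrow> normal_form option \<Rightarrow> normal_form option" where
  "nf_mult None s = None"
| "nf_mult (Some r) s = foldr nf_cons (nf_word r) s"

lemma nf_Nil [simp]: "nf [] = Some ([], [])"
  by (simp add: nf_def)

lemma nf_Cons [simp]: "nf (x # w) = nf_cons x (nf w)"
  by (simp add: nf_def)

lemma foldr_nf_cons_None [simp]: "foldr nf_cons xs None = None"
  by (induction xs) auto

lemma nf_mult_None_right [simp]: "nf_mult r None = None"
  by (cases r) auto

lemma nf_cons_nf_mult: "nf_cons x (nf_mult r s) = nf_mult (nf_cons x r) s"
proof (cases r)
  case (Some r')
  obtain u v where r': "r' = (u, v)" by fastforce
  show ?thesis
  proof (cases x)
    case (P i)
    then show ?thesis using Some r'
      by (cases u; cases "foldr nf_cons (nf_word (tl u, v)) s") auto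
  qed (use Some r' in simp)
qed simp

lemma foldr_nf_cons_eq_nf_mult: "foldr nf_cons w s = nf_mult (nf w) s"
  by (induction w) (simp_all add: nf_cons_nf_mult)

lemma nf_append_eq_foldr: "nf (u @ v) = foldr nf_cons u (nf v)"
  by (simp add: nf_def)

lemma nf_append: "nf (u @ v) = nf_mult (nf u) (nf v)"
  by (simp only: nf_append_eq_foldr foldr_nf_cons_eq_nf_mult)

lemma nf_nf_word [simp]: "nf (nf_word r) = Some r"
proof -
  obtain u v where r: "r = (u, v)" by fastforce
  have "nf (map P v) = Some ([], v)"
    by (induction v) auto
  moreover have "foldr nf_cons (map Q u) (Some ([], v)) = Some (u, v)"
    by (induction u) auto
  ultimately show ?thesis
    by (simp add: r nf_def)
qed

lemma Reg_empty: "{} \<in> Reg k"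
  by (simp add: Reg_def rat.intros)

lemma mstar_empty: "mstar mult one {} = {one}"
  by (auto elim: mstar.cases intro: mstar.intros)

lemma Reg_unit: "{[]} \<in> Reg k"
  using rat_star[OF rat_empty, of "{[x] | x. x \<in> Delta k}" "(@)" "[]"]
  by (simp add: Reg_def mstar_empty)

lemma Reg_union: "L \<in> Reg k \<Longrightarrow> M \<in> Reg k \<Longrightarrow> L \<union> M \<in> Reg k"
  by (simp add: Reg_def rat.intros)

lemma conc_eq_setmult: "L @@ M = setmult (@) L M"
  by (simp add: conc_def setmult_def)

lemma Reg_conc: "L \<in> Reg k \<Longrightarrow> M \<in> Reg k \<Longrightarrow> L @@ M \<in> Reg k"
  by (simp add: Reg_def conc_eq_setmult rat.intros)

lemma Reg_star: "L \<in> Reg k \<Longrightarrow> mstar (@) [] L \<in> Reg k"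
  by (simp add: Reg_def rat.intros)

lemma singleton_conc_singleton [simp]: "{u} @@ {v} = {u @ v}"
  by (simp add: conc_def)

lemma Reg_singleton: "set w \<subseteq> Delta k \<Longrightarrow> {w} \<in> Reg k"
proof (induction w)
  case (Cons x w)
  have "{[x]} \<in> Reg k"
    using Cons.prems by (auto simp: Reg_def intro: rat.intros)
  then show ?case
    using Reg_conc[of "{[x]}" k "{w}"] Cons by simp
qed (simp add: Reg_unit)

lemma set_mstar_subset: "x \<in> mstar (@) [] A \<Longrightarrow> \<forall>w\<in>A. set w \<subseteq> S \<Longrightarrow> set x \<subseteq> S"
  by (induction rule: mstar.induct) auto

lemma Reg_set_subset_Delta:
  assumes "L \<in> Reg k" and "w \<in> L"
  shows "set w \<subseteq> Delta k"
proof -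
  have "rat {[x] | x. x \<in> Delta k} (@) [] L"
    using assms(1) by (simp add: Reg_def)
  then have "\<forall>w\<in>L. set w \<subseteq> Delta k"
  proof (induction rule: rat.induct)
    case (rat_prod A B)
    then show ?case by (force simp: setmult_def)
  qed (auto dest: set_mstar_subset)
  then show ?thesis
    using assms(2) by blast
qed

lemma Reg_singleton_iff: "{w} \<in> Reg k \<longleftrightarrow> set w \<subseteq> Delta k"
  using Reg_set_subset_Delta Reg_singleton by blast

lemma mstar_conc_Reg: "X \<in> mstar (@@) {[]} A \<Longrightarrow> A \<subseteq> Reg k \<Longrightarrow> X \<in> Reg k"
  by (induction rule: mstar.induct) (auto simp: Reg_unit Reg_conc)

lemma Union_mstar_conc: "\<Union> (mstar (@@) {[]} A) = mstar (@) [] (\<Union>A)"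
proof
  show "\<Union> (mstar (@@) {[]} A) \<subseteq> mstar (@) [] (\<Union>A)"
  proof
    fix w assume "w \<in> \<Union> (mstar (@@) {[]} A)"
    then obtain X where "X \<in> mstar (@@) {[]} A" "w \<in> X" by blast
    then show "w \<in> mstar (@) [] (\<Union>A)"
      by (induction arbitrary: w rule: mstar.induct) (auto simp: conc_def intro: mstar.intros)
  qed
next
  show "mstar (@) [] (\<Union>A) \<subseteq> \<Union> (mstar (@@) {[]} A)"
  proof
    fix w assume "w \<in> mstar (@) [] (\<Union>A)"
    then show "w \<in> \<Union> (mstar (@@) {[]} A)"
    proof (induction rule: mstar.induct)
      case (mstar_step a x)
      then obtain Y X where "a \<in> Y" "Y \<in> A" "x \<in> X" "X \<in> mstar (@@) {[]} A" by blast
      then have "Y @@ X \<in> mstar (@@) {[]} A"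
        by (blast intro: mstar.mstar_step)
      moreover have "a @ x \<in> Y @@ X"
        using \<open>a \<in> Y\<close> \<open>x \<in> X\<close> by (auto simp: conc_def)
      ultimately show ?case by blast
    qed (auto intro: mstar.intros)
  qed
qed

lemma ratfam_Reg: "ratfam k A \<Longrightarrow> \<Union>A \<in> Reg k \<and> A \<subseteq> Reg k"
  unfolding ratfam_def
proof (induction rule: rat.induct)
  case (rat_prod A B)
  have "\<Union> (setmult (@@) A B) = \<Union>A @@ \<Union>B"
    by (auto simp: setmult_def conc_def)
  then show ?case
    using rat_prod by (auto simp: setmult_def intro!: Reg_conc)
next
  case (rat_star A)
  then show ?case
    using Union_mstar_conc mstar_conc_Reg Reg_star by (metis subsetI)
qed (auto simp: Reg_empty Reg_union)

lemma image_setmult: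
  assumes "\<And>a b. f (mult a b) = mult' (f a) (f b)"
  shows "f ` setmult mult A B = setmult mult' (f ` A) (f ` B)"
proof (intro set_eqI iffI)
  fix y assume "y \<in> f ` setmult mult A B"
  then show "y \<in> setmult mult' (f ` A) (f ` B)"
    unfolding setmult_def using assms by blast
next
  fix y assume "y \<in> setmult mult' (f ` A) (f ` B)"
  then obtain a b where "a \<in> A" "b \<in> B" "y = f (mult a b)"
    unfolding setmult_def by (auto simp: assms)
  then show "y \<in> f ` setmult mult A B"
    unfolding setmult_def by blast
qed

lemma image_mstar:
  assumes "f one = one'" "\<And>a b. f (mult a b) = mult' (f a) (f b)"
  shows "f ` mstar mult one A = mstar mult' one' (f ` A)"
proof
  show "f ` mstar mult one A \<subseteq> mstar mult' one' (f ` A)"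
  proof clarify
    fix x assume "x \<in> mstar mult one A"
    then show "f x \<in> mstar mult' one' (f ` A)"
      by (induction rule: mstar.induct) (simp_all add: assms mstar.mstar_one mstar.mstar_step)
  qed
next
  show "mstar mult' one' (f ` A) \<subseteq> f ` mstar mult one A"
  proof
    fix y assume "y \<in> mstar mult' one' (f ` A)"
    then show "y \<in> f ` mstar mult one A"
    proof (induction rule: mstar.induct)
      case mstar_one
      then show ?case
        using assms(1) by (metis image_eqI mstar.mstar_one)
    next
      case (mstar_step a y)
      then obtain a' x where "a = f a'" "a' \<in> A" "y = f x" "x \<in> mstar mult one A"
        by blast
      moreover from this have "mult a' x \<in> mstar mult one A"
        by (blast intro: mstar.mstar_step)
      ultimately show ?case
        using assms(2) by (metis image_eqI)
    qed
  qed
qed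

lemma ratfam_singletons:
  assumes "L \<in> Reg k"
  shows "ratfam k ((\<lambda>w. {w}) ` L)"
proof -
  have "rat {[x] | x. x \<in> Delta k} (@) [] L"
    using assms by (simp add: Reg_def)
  then show ?thesis
    unfolding ratfam_def
  proof (induction rule: rat.induct)
    case (rat_single a)
    then have "{a} \<in> Reg k"
      by (auto simp: Reg_def intro: rat.intros)
    then show ?case by (simp add: rat.intros)
  qed (simp_all add: image_Un rat.intros image_setmult[where mult' = "(@@)"]
      image_mstar[where one' = "{[]}" and mult' = "(@@)"])
qed

section \<open>The congruence \<open>rho\<close>\<close>

definition nfs :: "lang \<Rightarrow> normal_form set" where
  "nfs L = {r. \<exists>w\<in>L. nf w = Some r}"

lemma nfs_union: "nfs (L \<union> M) = nfs L \<union> nfs M"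
  by (auto simp: nfs_def)

lemma nfs_Union: "nfs (\<Union>A) = (\<Union>L\<in>A. nfs L)"
  by (auto simp: nfs_def)

lemma nfs_empty [simp]: "nfs {} = {}"
  by (simp add: nfs_def)

lemma nfs_singleton [simp]: "nfs {w} = set_option (nf w)"
  by (auto simp: nfs_def)

lemma nfs_conc: "nfs (L @@ M) = {t. \<exists>r\<in>nfs L. \<exists>s\<in>nfs M. nf_mult (Some r) (Some s) = Some t}"
proof (rule set_eqI)
  fix t
  have "t \<in> nfs (L @@ M) \<longleftrightarrow> (\<exists>u\<in>L. \<exists>v\<in>M. nf_mult (nf u) (nf v) = Some t)"
    by (force simp: nfs_def conc_def nf_append simp del: nf_mult.simps(2))
  moreover have "nf_mult (nf u) (nf v) = Some t \<longleftrightarrow>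
      (\<exists>r s. nf u = Some r \<and> nf v = Some s \<and> nf_mult (Some r) (Some s) = Some t)" for u v
    by (cases "nf u"; cases "nf v") (simp_all del: nf_mult.simps(2))
  ultimately show "t \<in> nfs (L @@ M) \<longleftrightarrow> t \<in> {t. \<exists>r\<in>nfs L. \<exists>s\<in>nfs M. nf_mult (Some r) (Some s) = Some t}"
    unfolding nfs_def mem_Collect_eq by blast
qed

definition same_nfs :: "nat \<Rightarrow> (lang \<times> lang) set" where
  "same_nfs k = {(a, b). a \<in> Reg k \<and> b \<in> Reg k \<and> nfs a = nfs b}"

lemma R_cong_same_nfs: "R_cong k (same_nfs k)"
  unfolding R_cong_def semiring_cong_def
proof (intro conjI allI impI)
  show "equiv (Reg k) (same_nfs k)"
    by (rule equivI) (auto simp: same_nfs_def refl_on_def sym_def trans_def)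
next
  fix a b c d assume "(a, b) \<in> same_nfs k" "(c, d) \<in> same_nfs k"
  then have Reg: "a \<in> Reg k" "b \<in> Reg k" "c \<in> Reg k" "d \<in> Reg k"
    and nfs: "nfs a = nfs b" "nfs c = nfs d"
    by (simp_all add: same_nfs_def)
  have "nfs (a \<union> c) = nfs (b \<union> d)" "nfs (a @@ c) = nfs (b @@ d)"
    by (simp_all only: nfs_union nfs_conc nfs)
  then show "(a \<union> c, b \<union> d) \<in> same_nfs k" "(a @@ c, b @@ d) \<in> same_nfs k"
    using Reg by (simp_all add: same_nfs_def Reg_union Reg_conc)
next
  fix A B assume "ratfam k A" "ratfam k B"
    and AB: "\<forall>a\<in>A. \<exists>b\<in>B. leq_mod (same_nfs k) a b"
    and BA: "\<forall>b\<in>B. \<exists>a\<in>A. leq_mod (same_nfs k) b a"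
  have "(\<Union>X\<in>A. nfs X) \<subseteq> (\<Union>Y\<in>B. nfs Y)" if "\<forall>X\<in>A. \<exists>Y\<in>B. leq_mod (same_nfs k) X Y"
    for A B :: "lang set"
    using that by (fastforce simp: leq_mod_def same_nfs_def nfs_union)
  then have "nfs (\<Union>A) = nfs (\<Union>B)"
    unfolding nfs_Union using AB BA by blast
  then show "(\<Union>A, \<Union>B) \<in> same_nfs k"
    using ratfam_Reg \<open>ratfam k A\<close> \<open>ratfam k B\<close> by (simp add: same_nfs_def)
qed

lemma gens_subset_same_nfs: "gens k \<subseteq> same_nfs k"
proof
  fix x assume "x \<in> gens k"
  then obtain i j where x: "x = ({[P i, Q j]}, if i = j then {[]} else {})" "i < k" "j < k"
    by (auto simp: gens_def)
  then have "{[P i, Q j]} \<in> Reg k"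
    by (intro Reg_singleton) (auto simp: Delta_def)
  then show "x \<in> same_nfs k"
    using x by (simp add: same_nfs_def Reg_unit Reg_empty)
qed

definition nf_lang :: "normal_form option \<Rightarrow> lang" where
  "nf_lang r = (case r of None \<Rightarrow> {} | Some p \<Rightarrow> {nf_word p})"

locale polycyclic_congruence =
  fixes k :: nat and r :: "(lang \<times> lang) set"
  assumes R_cong: "R_cong k r" and gens_subset: "gens k \<subseteq> r"
begin

lemma equiv_Reg: "equiv (Reg k) r"
  using R_cong by (simp add: R_cong_def semiring_cong_def)

lemma cong_refl: "a \<in> Reg k \<Longrightarrow> (a, a) \<in> r"
  using equiv_Reg by (auto simp: equiv_def refl_on_def)

lemma cong_sym: "(a, b) \<in> r \<Longrightarrow> (b, a) \<in> r"
  using equiv_Reg by (auto simp: equiv_def sym_def)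

lemma cong_trans: "(a, b) \<in> r \<Longrightarrow> (b, c) \<in> r \<Longrightarrow> (a, c) \<in> r"
  using equiv_Reg unfolding equiv_def trans_def by blast

lemma cong_Reg_right: "(a, b) \<in> r \<Longrightarrow> b \<in> Reg k"
  using equiv_Reg by (auto simp: equiv_def refl_on_def)

lemma cong_union: "(a, b) \<in> r \<Longrightarrow> (c, d) \<in> r \<Longrightarrow> (a \<union> c, b \<union> d) \<in> r"
  using R_cong by (simp add: R_cong_def semiring_cong_def)

lemma cong_conc: "(a, b) \<in> r \<Longrightarrow> (c, d) \<in> r \<Longrightarrow> (a @@ c, b @@ d) \<in> r"
  using R_cong by (simp add: R_cong_def semiring_cong_def)

lemma cong_Union:
  "ratfam k A \<Longrightarrow> ratfam k B \<Longrightarrow> \<forall>a\<in>A. \<exists>b\<in>B. leq_mod r a b \<Longrightarrow>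
    \<forall>b\<in>B. \<exists>a\<in>A. leq_mod r b a \<Longrightarrow> (\<Union>A, \<Union>B) \<in> r"
  using R_cong by (simp add: R_cong_def)

lemma leq_mod_if_cong:
  assumes "(a, b) \<in> r"
  shows "leq_mod r a b"
  using cong_union[OF assms cong_refl[OF cong_Reg_right[OF assms]]] by (simp add: leq_mod_def)

lemma letter_nf_word_cong:
  assumes "x \<in> Delta k" and "set (nf_word p) \<subseteq> Delta k"
  shows "({x # nf_word p}, nf_lang (nf_cons x (Some p))) \<in> r"
proof -
  obtain u v where p: "p = (u, v)" by fastforce
  show ?thesis
  proof (cases "\<exists>i j u'. x = P i \<and> u = j # u'")
    case True
    then obtain i j u' where x: "x = P i" and u: "u = j # u'"
      by blast
    have "i < k" "j < k"
      using assms by (auto simp: x p u Delta_def)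
    then have "({[P i, Q j]}, if i = j then {[]} else {}) \<in> r"
      using gens_subset by (auto simp: gens_def)
    moreover have "set (nf_word (u', v)) \<subseteq> Delta k"
      using assms(2) by (auto simp: p u)
    ultimately have "({[P i, Q j]} @@ {nf_word (u', v)},
        (if i = j then {[]} else {}) @@ {nf_word (u', v)}) \<in> r"
      by (intro cong_conc cong_refl Reg_singleton)
    then show ?thesis
      by (cases "i = j") (simp_all add: x p u nf_lang_def conc_def)
  next
    case False
    then have "nf_lang (nf_cons x (Some p)) = {x # nf_word p}"
      by (cases x; cases u) (auto simp: p nf_lang_def)
    then show ?thesis
      using assms by (simp add: cong_refl Reg_singleton)
  qed
qed

lemma word_cong_nf_lang: "set w \<subseteq> Delta k \<Longrightarrow> ({w}, nf_lang (nf w)) \<in> r"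
proof (induction w)
  case Nil
  then show ?case
    using cong_refl[OF Reg_unit] by (simp add: nf_lang_def)
next
  case (Cons x w)
  then have x: "x \<in> Delta k" and IH: "({w}, nf_lang (nf w)) \<in> r"
    by auto
  have "({[x]} @@ {w}, {[x]} @@ nf_lang (nf w)) \<in> r"
    using x by (intro cong_conc[OF cong_refl IH] Reg_singleton) simp
  then have step: "({x # w}, {[x]} @@ nf_lang (nf w)) \<in> r"
    by simp
  show ?case
  proof (cases "nf w")
    case None
    then show ?thesis
      using step by (simp add: nf_lang_def conc_def)
  next
    case (Some p)
    then have "set (nf_word p) \<subseteq> Delta k"
      using cong_Reg_right[OF IH] by (simp add: nf_lang_def Reg_singleton_iff)
    then show ?thesis
      using cong_trans[OF step] letter_nf_word_cong[OF x] Some by (simp add: nf_lang_def)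
  qed
qed

lemma singletons_dominated:
  assumes "a \<in> Reg k" "b \<in> Reg k" "nfs a \<subseteq> nfs b" and X: "X \<in> insert {} ((\<lambda>w. {w}) ` a)"
  shows "\<exists>Y \<in> insert {} ((\<lambda>w. {w}) ` b). leq_mod r X Y"
proof -
  have "\<exists>Y \<in> insert {} ((\<lambda>w. {w}) ` b). (X, Y) \<in> r"
  proof (cases "X = {}")
    case True
    then show ?thesis
      using cong_refl[OF Reg_empty] by blast
  next
    case False
    then obtain w where "w \<in> a" and X: "X = {w}"
      using X by blast
    then have w: "({w}, nf_lang (nf w)) \<in> r"
      using assms by (intro word_cong_nf_lang Reg_set_subset_Delta)
    show ?thesis
    proof (cases "nf w")
      case None
      then show ?thesis
        using w X by (auto simp: nf_lang_def)
    next
      case (Some p)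
      then obtain w' where "w' \<in> b" "nf w' = Some p"
        using assms \<open>w \<in> a\<close> by (auto simp: nfs_def)
      moreover have "({w'}, nf_lang (nf w')) \<in> r"
        using assms \<open>w' \<in> b\<close> by (intro word_cong_nf_lang Reg_set_subset_Delta)
      ultimately have "({w}, {w'}) \<in> r"
        using w Some by (metis cong_sym cong_trans)
      then show ?thesis
        using \<open>w' \<in> b\<close> X by blast
    qed
  qed
  then show ?thesis
    using leq_mod_if_cong by blast
qed

text \<open>The empty language is added to both families to dominate the words that reduce to zero.\<close>

lemma same_nfs_subset: "same_nfs k \<subseteq> r"
proof clarify
  fix a b assume "(a, b) \<in> same_nfs k"
  then have ab: "a \<in> Reg k" "b \<in> Reg k" "nfs a = nfs b"
    by (auto simp: same_nfs_def)
  have ratfam_with_empty: "ratfam k (insert {} ((\<lambda>w. {w}) ` L))" if "L \<in> Reg k" for L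
    using rat_union[OF rat_single[OF Reg_empty] ratfam_singletons[OF that, unfolded ratfam_def]]
    by (simp add: ratfam_def)
  have "(\<Union>(insert {} ((\<lambda>w. {w}) ` a)), \<Union>(insert {} ((\<lambda>w. {w}) ` b))) \<in> r"
    by (intro cong_Union ratfam_with_empty ab(1,2) ballI singletons_dominated) (use ab in auto)
  then show "(a, b) \<in> r"
    by simp
qed

end

lemma rho_eq_same_nfs: "rho k = same_nfs k"
proof
  show "rho k \<subseteq> same_nfs k"
    unfolding rho_def using R_cong_same_nfs gens_subset_same_nfs by blast
  show "same_nfs k \<subseteq> rho k"
    unfolding rho_def using polycyclic_congruence.same_nfs_subset
    by (blast intro: polycyclic_congruence.intro)
qed

lemma polycyclic_congruence_rho: "polycyclic_congruence k (rho k)"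
  by (simp add: polycyclic_congruence_def rho_eq_same_nfs R_cong_same_nfs gens_subset_same_nfs)

lemma leq_mod_rho_iff: "leq_mod (rho k) a b \<longleftrightarrow> a \<union> b \<in> Reg k \<and> b \<in> Reg k \<and> nfs a \<subseteq> nfs b"
  by (auto simp: rho_eq_same_nfs leq_mod_def same_nfs_def nfs_union)

lemma nf_map_Q: "nf (map Q u) = Some (u, [])"
  using nf_nf_word[of "(u, [])"] by simp

lemma is_lub_mod_nfs:
  assumes "ratfam k A" and "is_lub_mod k A s"
  shows "nfs s = (\<Union>a\<in>A. nfs a)"
proof -
  have A: "\<Union>A \<in> Reg k" "A \<subseteq> Reg k"
    using ratfam_Reg[OF assms(1)] by auto
  then have "\<forall>a\<in>A. leq_mod (rho k) a (\<Union>A)"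
    by (auto simp: leq_mod_rho_iff nfs_Union Un_absorb1[OF Union_upper])
  then have "nfs s \<subseteq> nfs (\<Union>A)"
    using assms(2) A by (simp add: is_lub_mod_def leq_mod_rho_iff)
  moreover have "\<forall>a\<in>A. nfs a \<subseteq> nfs s"
    using assms(2) by (simp add: is_lub_mod_def leq_mod_rho_iff)
  ultimately show ?thesis
    by (auto simp: nfs_Union)
qed

lemma is_lub_modI:
  assumes "s \<in> Reg k" "A \<subseteq> Reg k" "nfs s = (\<Union>a\<in>A. nfs a)"
  shows "is_lub_mod k A s"
  using assms by (auto simp: is_lub_mod_def leq_mod_rho_iff Reg_union)

section \<open>The embedding of \<open>C\<^sub>m'\<close> into \<open>C\<^sub>2'\<close>\<close>

definition codeword :: "nat \<Rightarrow> nat list" where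
  "codeword j = 1 # replicate j 0 @ [1]"

definition encode :: "nat list \<Rightarrow> nat list" where
  "encode u = concat (map codeword u)"

fun emb_letter :: "letter \<Rightarrow> letter list" where
  "emb_letter (P i) = map P (codeword i)"
| "emb_letter (Q j) = map Q (codeword j)"

definition emb_word :: "letter list \<Rightarrow> letter list" where
  "emb_word w = concat (map emb_letter w)"

definition emb :: "lang \<Rightarrow> lang" where
  "emb L = emb_word ` L"

definition emb_nf :: "normal_form \<Rightarrow> normal_form" where
  "emb_nf = map_prod encode encode"

lemma emb_word_append: "emb_word (u @ v) = emb_word u @ emb_word v"
  by (simp add: emb_word_def)

lemma set_emb_word: "set (emb_word w) \<subseteq> Delta 2"
proof -
  have "set (emb_letter x) \<subseteq> Delta 2" for x
    by (cases x) (auto simp: codeword_def Delta_def)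
  then show ?thesis
    by (auto simp: emb_word_def)
qed

lemma foldr_replicate_P0:
  assumes "x \<noteq> 0"
  shows "foldr nf_cons (replicate i (P 0)) (Some (replicate j 0 @ x # u, v)) =
    (if i \<le> j then Some (replicate (j - i) 0 @ x # u, v) else None)"
proof (induction i)
  case (Suc i)
  then show ?case
    using assms by (cases "j - i") (auto simp: Suc_diff_Suc simp flip: Suc_diff_le)
qed simp

lemma nf_emb_P_emb_Q: "nf (emb_letter (P i) @ emb_letter (Q j)) = (if i = j then Some ([], []) else None)"
proof -
  have "nf (emb_letter (P i) @ emb_letter (Q j)) =
      nf_cons (P 1) (foldr nf_cons (replicate i (P 0)) (Some (replicate j 0 @ [1], [])))"
    by (simp add: nf_append_eq_foldr nf_map_Q del: foldr_replicate)
      (simp add: codeword_def del: foldr_replicate)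
  then show ?thesis
    by (cases "j - i") (auto simp: foldr_replicate_P0 simp del: foldr_replicate)
qed

lemma nf_emb_letter_nf_word:
  "nf (emb_letter x @ nf_word (emb_nf p)) = map_option emb_nf (nf_cons x (Some p))"
proof -
  obtain u v where p: "p = (u, v)" by fastforce
  show ?thesis
  proof (cases x)
    case (Q j)
    then have "emb_letter x @ nf_word (emb_nf p) = nf_word (emb_nf (j # u, v))"
      by (simp add: p emb_nf_def encode_def)
    then show ?thesis
      by (simp add: Q p)
  next
    case (P i)
    show ?thesis
    proof (cases u)
      case Nil
      then have "emb_letter x @ nf_word (emb_nf p) = nf_word (emb_nf ([], i # v))"
        by (simp add: P p emb_nf_def encode_def)
      then show ?thesis
        by (simp add: P p Nil)
    next
      case (Cons j u')
      then have "emb_letter x @ nf_word (emb_nf p) =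
          (emb_letter (P i) @ emb_letter (Q j)) @ nf_word (emb_nf (u', v))"
        by (simp add: P p emb_nf_def encode_def)
      then have "nf (emb_letter x @ nf_word (emb_nf p)) =
          nf_mult (nf (emb_letter (P i) @ emb_letter (Q j))) (Some (emb_nf (u', v)))"
        by (simp only: nf_append[of "emb_letter (P i) @ emb_letter (Q j)"] nf_nf_word)
      then show ?thesis
        by (simp add: P p Cons nf_emb_P_emb_Q del: emb_letter.simps)
    qed
  qed
qed

lemma nf_emb_word: "nf (emb_word w) = map_option emb_nf (nf w)"
proof (induction w)
  case Nil
  then show ?case
    by (simp add: emb_word_def emb_nf_def encode_def)
next
  case (Cons x w)
  have "nf (emb_word (x # w)) = nf_mult (nf (emb_letter x)) (map_option emb_nf (nf w))"
    by (simp add: emb_word_def nf_append flip: Cons del: nf_mult.simps(2))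
  also have "\<dots> = map_option emb_nf (nf (x # w))"
  proof (cases "nf w")
    case (Some p)
    then show ?thesis
      using nf_emb_letter_nf_word[of x p] by (simp add: nf_append del: nf_mult.simps(2))
  qed simp
  finally show ?case .
qed

lemma nfs_emb: "nfs (emb L) = emb_nf ` nfs L"
proof (intro set_eqI iffI)
  fix t assume "t \<in> nfs (emb L)"
  then obtain w where "w \<in> L" "map_option emb_nf (nf w) = Some t"
    by (auto simp: nfs_def emb_def nf_emb_word)
  then show "t \<in> emb_nf ` nfs L"
    unfolding nfs_def by blast
next
  fix t assume "t \<in> emb_nf ` nfs L"
  then obtain w r where "w \<in> L" "nf w = Some r" "t = emb_nf r"
    unfolding nfs_def by blast
  then have "nf (emb_word w) = Some t"
    by (simp add: nf_emb_word)
  then show "t \<in> nfs (emb L)"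
    unfolding nfs_def emb_def using \<open>w \<in> L\<close> by blast
qed

lemma codeword_append_eqD: "codeword i @ xs = codeword j @ ys \<Longrightarrow> i = j \<and> xs = ys"
proof -
  have "replicate i 0 @ Suc 0 # xs = replicate j 0 @ Suc 0 # ys \<Longrightarrow> i = j \<and> xs = ys"
    by (induction i arbitrary: j; case_tac j) auto
  then show "codeword i @ xs = codeword j @ ys \<Longrightarrow> i = j \<and> xs = ys"
    by (simp add: codeword_def)
qed

lemma inj_encode: "inj encode"
proof (rule injI)
  fix u u' show "encode u = encode u' \<Longrightarrow> u = u'"
  proof (induction u arbitrary: u')
    case Nil
    then show ?case
      by (cases u') (auto simp: encode_def codeword_def)
  next
    case (Cons j u)
    then obtain j' u'' where "u' = j' # u''"
      by (cases u') (auto simp: encode_def codeword_def)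
    then show ?case
      using Cons codeword_append_eqD[of j "encode u" j' "encode u''"] by (auto simp: encode_def)
  qed
qed

lemma inj_emb_nf: "inj emb_nf"
  using map_prod_inj_on[OF inj_encode inj_encode] by (simp add: emb_nf_def)

lemma emb_word_Nil: "emb_word [] = []"
  by (simp add: emb_word_def)

lemma Reg_emb:
  assumes "L \<in> Reg m"
  shows "emb L \<in> Reg 2"
proof -
  have "rat {[x] | x. x \<in> Delta m} (@) [] L"
    using assms by (simp add: Reg_def)
  then show ?thesis
    unfolding emb_def
  proof (induction rule: rat.induct)
    case (rat_single a)
    then show ?case
      using Reg_singleton[OF set_emb_word] by simp
  next
    case (rat_prod A B)
    then show ?case
      using Reg_conc by (simp add: image_setmult emb_word_append conc_eq_setmult)
  qed (simp_all add: Reg_empty image_Un Reg_union image_mstar emb_word_Nil emb_word_append Reg_star)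
qed

lemma emb_union: "emb (a \<union> b) = emb a \<union> emb b"
  by (simp add: emb_def image_Un)

lemma emb_conc: "emb (a @@ b) = emb a @@ emb b"
  by (simp add: emb_def conc_eq_setmult image_setmult emb_word_append)

lemma R_morph_emb: "R_morph m 2 emb"
  unfolding R_morph_def
proof (intro conjI allI impI ballI)
  show "emb L \<in> Reg 2" if "L \<in> Reg m" for L
    using that by (rule Reg_emb)
next
  fix a b assume "(a, b) \<in> rho m"
  then show "(emb a, emb b) \<in> rho 2"
    by (auto simp: rho_eq_same_nfs same_nfs_def Reg_emb nfs_emb)
next
  fix a b assume "a \<in> Reg m" "b \<in> Reg m"
  then show "(emb (a \<union> b), emb a \<union> emb b) \<in> rho 2" "(emb (a @@ b), emb a @@ emb b) \<in> rho 2"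
    by (auto simp: rho_eq_same_nfs same_nfs_def emb_union emb_conc Reg_union Reg_conc Reg_emb)
next
  fix A s assume "ratfam m A" "is_lub_mod m A s"
  then have "s \<in> Reg m" "A \<subseteq> Reg m" "nfs s = (\<Union>a\<in>A. nfs a)"
    using ratfam_Reg is_lub_mod_nfs by (auto simp: is_lub_mod_def)
  then show "is_lub_mod 2 (emb ` A) (emb s)"
    by (intro is_lub_modI) (auto simp: Reg_emb nfs_emb)
qed (simp_all add: rho_eq_same_nfs same_nfs_def emb_def emb_word_Nil Reg_empty Reg_unit)

lemma inj_mod_emb: "inj_mod m 2 emb"
  unfolding inj_mod_def
  by (auto simp: rho_eq_same_nfs same_nfs_def nfs_emb inj_image_eq_iff[OF inj_emb_nf])

lemma singleton_rho_nf_lang: "set w \<subseteq> Delta k \<Longrightarrow> ({w}, nf_lang (nf w)) \<in> rho k"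
  using polycyclic_congruence.word_cong_nf_lang[OF polycyclic_congruence_rho] .

lemma emb_P_conc_emb_Q: "(emb {[P i]} @@ emb {[Q j]}, if i = j then {[]} else {}) \<in> rho 2"
  using singleton_rho_nf_lang[OF set_emb_word, of "[P i, Q j]"]
  by (cases "i = j") (simp_all add: emb_def emb_word_def nf_emb_P_emb_Q nf_lang_def del: emb_letter.simps)

lemma P0_conc_emb_Q: "({[P 0]} @@ emb {[Q j]}, {}) \<in> rho 2"
  using singleton_rho_nf_lang[of "P 0 # emb_word [Q j]" 2] set_emb_word[of "[Q j]"]
  by (simp add: emb_def emb_word_def nf_map_Q nf_lang_def Delta_def) (simp add: codeword_def)

lemma emb_P_conc_Q0: "(emb {[P i]} @@ {[Q 0]}, {}) \<in> rho 2"
  using singleton_rho_nf_lang[of "emb_word [P i] @ [Q 0]" 2] set_emb_word[of "[P i]"]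
  by (simp add: emb_def emb_word_def codeword_def nf_lang_def Delta_def nf_append_eq_foldr
      del: foldr_replicate)

text \<open>The construction works for every \<open>m\<close>.\<close>

theorem lemma1:
  fixes m :: nat
  assumes "m \<ge> 2"
  shows "\<exists>g. R_morph m 2 g \<and> inj_mod m 2 g \<and>
    (\<forall>i<m. \<forall>j<m.
       (g {[P i]} @@ g {[Q j]}, if i = j then {[]} else {}) \<in> rho 2 \<and>
       ({[P 0]} @@ g {[Q j]}, {}) \<in> rho 2 \<and>
       (g {[P i]} @@ {[Q 0]}, {}) \<in> rho 2)"
  using R_morph_emb inj_mod_emb emb_P_conc_emb_Q P0_conc_emb_Q emb_P_conc_Q0 by blast

end
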